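(* Identify $E$ with its image under global coordinates. Then: (i) the set of $\mathrm{Spin}(2)$ representation classes in $E$ is exactly $E_2$; (ii) the set of $\mathrm{Pin}(2)$ representation classes in $E$ is $E_2$ together with the points of $E$ lying on the three coordinate axes of $\mathbb{R}^3$; (iii) for each $-2<k<2$, exactly six points of $E_k$ are $\mathrm{Pin}(2)$ representation classes.
   Context: $M$ is a torus with one boundary component; $\pi_1(M)$ is free on $X,Y$, and $K=XYX^{-1}Y^{-1}$. $E=\operatorname{Hom}(\pi_1(M),\mathrm{SU}(2))/\mathrm{SU}(2)$ is identified via $[\sigma]\mapsto(\operatorname{tr}\sigma(X),\operatorname{tr}\sigma(Y),\operatorname{tr}\sigma(XY))$ with $\{(x,y,z)\in[-2,2]^3:-2\le x^2+y^2+z^2-xyz-2\le2\}$, and $E_k=\{(x,y,z)\in E: x^2+y^2+z^2-xyz-2=k\}$ (note $\operatorname{tr}\sigma(K)=x^2+y^2+z^2-xyz-2$). In the quaternionic model ($1,\mathrm{i},\mathrm{j},\mathrm{k}$ = the matrices $\begin{pmatrix}1&0\\0&1\end{pmatrix},\begin{pmatrix}i&0\\0&-i\end{pmatrix},\begin{pmatrix}0&1\\-1&0\end{pmatrix},\begin{pmatrix}0&i\\i&0\end{pmatrix}$), $\mathrm{Spin}(2)=\{\cos\theta+\sin\theta\,\mathrm{j}\}$, $\mathrm{Spin}_-(2)=\{\cos\theta\,\mathrm{k}+\sin\theta\,\mathrm{i}\}$, $\mathrm{Pin}(2)=\mathrm{Spin}(2)\cup\mathrm{Spin}_-(2)$.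 For a subgroup $G\subset\mathrm{SU}(2)$, a point $[\sigma]\in E$ is a $G$ representation class if some representative takes values in $G$. *)

theory Defs
  imports "HOL-Analysis.Analysis"
begin

definition mat2 :: "complex \<Rightarrow> complex \<Rightarrow> complex \<Rightarrow> complex \<Rightarrow> complex^2^2" where
  "mat2 a b c d = vector [vector [a, b], vector [c, d]]"

definition cadjoint :: "complex^2^2 \<Rightarrow> complex^2^2" where
  "cadjoint A = (\<chi> i j. cnj (A $ j $ i))"

definition SU2 :: "(complex^2^2) set" where
  "SU2 = {A. cadjoint A ** A = mat 1 \<and> det A = 1}"

definition smat :: "complex \<Rightarrow> complex^2^2 \<Rightarrow> complex^2^2" (infixl "\<cdot>\<^sub>m" 75) where
  "c \<cdot>\<^sub>m A = (\<chi> i j. c * A $ i $ j)"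

definition q1 :: "complex^2^2" where "q1 = mat2 1 0 0 1"
definition qi :: "complex^2^2" where "qi = mat2 \<i> 0 0 (- \<i>)"
definition qj :: "complex^2^2" where "qj = mat2 0 1 (-1) 0"
definition qk :: "complex^2^2" where "qk = mat2 0 \<i> \<i> 0"

definition Spin2 :: "(complex^2^2) set" where
  "Spin2 = {complex_of_real (cos \<theta>) \<cdot>\<^sub>m q1 + complex_of_real (sin \<theta>) \<cdot>\<^sub>m qj | \<theta>. True}"

definition Spin2_minus :: "(complex^2^2) set" where
  "Spin2_minus = {complex_of_real (cos \<theta>) \<cdot>\<^sub>m qk + complex_of_real (sin \<theta>) \<cdot>\<^sub>m qi | \<theta>. True}"

definition Pin2 :: "(complex^2^2) set" where
  "Pin2 = Spin2 \<union> Spin2_minus"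

text \<open>The trace of the commutator K, in global coordinates.\<close>
definition kappa :: "real \<times> real \<times> real \<Rightarrow> real" where
  "kappa p = (case p of (x, y, z) \<Rightarrow> x^2 + y^2 + z^2 - x*y*z - 2)"

text \<open>The character variety E in global coordinates (x,y,z) = (tr X, tr Y, tr XY).\<close>
definition E :: "(real \<times> real \<times> real) set" where
  "E = {(x, y, z). x \<in> {-2..2} \<and> y \<in> {-2..2} \<and> z \<in> {-2..2}
          \<and> -2 \<le> kappa (x, y, z) \<and> kappa (x, y, z) \<le> 2}"

definition E_level :: "real \<Rightarrow> (real \<times> real \<times> real) set" where
  "E_level k = {p \<in> E. kappa p = k}"

text \<open>A point of E is a G representation class if it is the image of some
  representation (determined by the images A, B of the free generators X, Y)
  taking values in G \<subseteq> SU(2).\<close>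
definition rep_class :: "(complex^2^2) set \<Rightarrow> real \<times> real \<times> real \<Rightarrow> bool" where
  "rep_class G p = (case p of (x, y, z) \<Rightarrow>
     (\<exists>A B. A \<in> SU2 \<and> B \<in> SU2 \<and> A \<in> G \<and> B \<in> G \<and>
        trace A = complex_of_real x \<and> trace B = complex_of_real y \<and>
        trace (A ** B) = complex_of_real z))"

definition coord_axes :: "(real \<times> real \<times> real) set" where
  "coord_axes = {(x, y, z). (y = 0 \<and> z = 0) \<or> (x = 0 \<and> z = 0) \<or> (x = 0 \<and> y = 0)}"

end

theory Submission
  imports Defs
begin

text \<open>Parametrising Spin(2) by \<open>S t = cos t + sin t j\<close> and Spin_-(2) by
  \<open>M t = cos t k + sin t i\<close>, the quaternion relations give \<open>S a S b = S (a + b)\<close>,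
  \<open>S a M b = M (a + b)\<close>, \<open>M a S b = M (a - b)\<close> and \<open>M a M b = S (a - b + \<pi>)\<close>,
  while \<open>tr S t = 2 cos t\<close> and \<open>tr M t = 0\<close>. Hence a Spin(2) pair has coordinates
  \<open>(2 cos a, 2 cos b, 2 cos (a + b))\<close>, and a Pin(2) pair that is not a Spin(2) pair
  has at least two vanishing coordinates. The identity
  \<open>\<kappa>(2 cos a, 2 cos b, z) - 2 = (z - 2 cos (a + b)) (z - 2 cos (a - b))\<close>
  shows that the first family is exactly \<open>E_2\<close>; on the coordinate axes
  \<open>\<kappa> = t\<^sup>2 - 2\<close>, so \<open>E_k\<close> meets them in the six points \<open>\<plusminus>\<surd>(k + 2)\<close>.\<close>

lemma mat2_nth [simp]:
  "mat2 a b c d $ 1 $ 1 = a" "mat2 a b c d $ 1 $ 2 = b"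
  "mat2 a b c d $ 2 $ 1 = c" "mat2 a b c d $ 2 $ 2 = d"
  by (simp_all add: mat2_def)

lemma mat2_eq_iff:
  "(A::complex^2^2) = B \<longleftrightarrow> A$1$1 = B$1$1 \<and> A$1$2 = B$1$2 \<and> A$2$1 = B$2$1 \<and> A$2$2 = B$2$2"
  by (auto simp: vec_eq_iff forall_2)

lemma mat2_mult:
  "mat2 a b c d ** mat2 e f g h = mat2 (a*e + b*g) (a*f + b*h) (c*e + d*g) (c*f + d*h)"
  by (simp add: mat2_eq_iff matrix_matrix_mult_def sum_2)

lemma trace_mat2: "trace (mat2 a b c d) = a + d"
  by (simp add: trace_def sum_2)

lemma det_mat2: "det (mat2 a b c d) = a * d - b * c"
  by (simp add: det_2)

lemma cadjoint_mat2: "cadjoint (mat2 a b c d) = mat2 (cnj a) (cnj c) (cnj b) (cnj d)"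
  by (simp add: mat2_eq_iff cadjoint_def)

lemma mat_1_eq_mat2: "mat 1 = mat2 1 0 0 1"
  by (simp add: mat2_eq_iff mat_def)

lemma smat_mat2: "c \<cdot>\<^sub>m mat2 a b d e = mat2 (c*a) (c*b) (c*d) (c*e)"
  by (simp add: mat2_eq_iff smat_def)

lemma plus_mat2: "mat2 a b c d + mat2 e f g h = mat2 (a+e) (b+f) (c+g) (d+h)"
  by (simp add: mat2_eq_iff)

definition spin_mat :: "real \<Rightarrow> complex^2^2" where
  "spin_mat t = mat2 (of_real (cos t)) (of_real (sin t)) (- of_real (sin t)) (of_real (cos t))"

definition spin_minus_mat :: "real \<Rightarrow> complex^2^2" where
  "spin_minus_mat t =
     mat2 (\<i> * of_real (sin t)) (\<i> * of_real (cos t)) (\<i> * of_real (cos t)) (- \<i> * of_real (sin t))"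

lemma Spin2_eq_range: "Spin2 = range spin_mat"
  by (auto simp: Spin2_def spin_mat_def q1_def qj_def smat_mat2 plus_mat2)

lemma Spin2_minus_eq_range: "Spin2_minus = range spin_minus_mat"
  by (auto simp: Spin2_minus_def spin_minus_mat_def qk_def qi_def smat_mat2 plus_mat2 mult.commute)

lemma of_real_cos_sin_squared:
  "of_real (cos t) * of_real (cos t) + of_real (sin t) * of_real (sin t) = (1::complex)"
  by (simp flip: of_real_mult of_real_add)

lemma spin_mat_SU2: "spin_mat t \<in> SU2"
  by (simp add: SU2_def spin_mat_def cadjoint_mat2 mat2_mult det_mat2 mat_1_eq_mat2 mat2_eq_iff
      of_real_cos_sin_squared add.commute)

lemma spin_minus_mat_SU2: "spin_minus_mat t \<in> SU2"
  by (simp add: SU2_def spin_minus_mat_def cadjoint_mat2 mat2_mult det_mat2 mat_1_eq_mat2 mat2_eq_iff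
      algebra_simps of_real_cos_sin_squared)

lemma spin_mat_mult: "spin_mat a ** spin_mat b = spin_mat (a + b)"
  by (simp add: spin_mat_def mat2_mult cos_add sin_add algebra_simps)

lemma spin_mat_mult_spin_minus_mat: "spin_mat a ** spin_minus_mat b = spin_minus_mat (a + b)"
  by (simp add: spin_mat_def spin_minus_mat_def mat2_mult cos_add sin_add algebra_simps)

lemma spin_minus_mat_mult_spin_mat: "spin_minus_mat a ** spin_mat b = spin_minus_mat (a - b)"
  by (simp add: spin_mat_def spin_minus_mat_def mat2_mult cos_diff sin_diff algebra_simps)

lemma spin_minus_mat_mult: "spin_minus_mat a ** spin_minus_mat b = spin_mat (a - b + pi)"
  by (simp add: spin_mat_def spin_minus_mat_def mat2_mult cos_diff sin_diff algebra_simps)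

lemma trace_spin_mat: "trace (spin_mat t) = of_real (2 * cos t)"
  by (simp add: spin_mat_def trace_mat2)

lemma trace_spin_minus_mat: "trace (spin_minus_mat t) = 0"
  by (simp add: spin_minus_mat_def trace_mat2)

lemma ex_two_cos_iff: "(\<exists>a. t = 2 * cos a) \<longleftrightarrow> (t::real) \<in> {-2..2}"
proof
  assume "t \<in> {-2..2}"
  then have "t = 2 * cos (arccos (t / 2))"
    by simp
  then show "\<exists>a. t = 2 * cos a" ..
qed auto

lemma coord_axes_in_E_iff:
  assumes "(x, y, z) \<in> coord_axes"
  shows "(x, y, z) \<in> E \<longleftrightarrow> x \<in> {-2..2} \<and> y \<in> {-2..2} \<and> z \<in> {-2..2}"
proof -
  have "t\<^sup>2 \<le> 2\<^sup>2 \<longleftrightarrow> t \<in> {-2..2}" for t :: real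
    using power2_le_iff_abs_le[where x = t and y = 2] by (auto simp: abs_le_iff)
  then show ?thesis
    using assms by (auto simp: coord_axes_def E_def kappa_def)
qed

lemma E_inter_coord_axes_iff:
  "p \<in> E \<inter> coord_axes \<longleftrightarrow> (\<exists>a. p \<in> {(2 * cos a, 0, 0), (0, 2 * cos a, 0), (0, 0, 2 * cos a)})"
proof -
  obtain x y z where p: "p = (x, y, z)"
    by (cases p) auto
  have "p \<in> E \<inter> coord_axes \<longleftrightarrow> (\<exists>t\<in>{-2..2}. p \<in> {(t, 0, 0), (0, t, 0), (0, 0, t)})"
    unfolding p using coord_axes_in_E_iff by (auto simp: coord_axes_def)
  also have "\<dots> \<longleftrightarrow> (\<exists>a. p \<in> {(2 * cos a, 0, 0), (0, 2 * cos a, 0), (0, 0, 2 * cos a)})"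
    using ex_two_cos_iff by blast
  finally show ?thesis .
qed

lemma Pin2_subset_SU2: "Pin2 \<subseteq> SU2"
  by (auto simp: Pin2_def Spin2_eq_range Spin2_minus_eq_range spin_mat_SU2 spin_minus_mat_SU2)

lemma rep_class_mono: "G \<subseteq> H \<Longrightarrow> rep_class G p \<Longrightarrow> rep_class H p"
  by (auto simp: rep_class_def split: prod.splits)

lemma rep_class_iff:
  assumes "G \<subseteq> SU2"
  shows "rep_class G (x, y, z) \<longleftrightarrow>
    (\<exists>A\<in>G. \<exists>B\<in>G. trace A = of_real x \<and> trace B = of_real y \<and> trace (A ** B) = of_real z)"
  using assms by (auto simp: rep_class_def)

lemma Spin2_subset_SU2: "Spin2 \<subseteq> SU2"
  using Pin2_subset_SU2 by (simp add: Pin2_def)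

lemma rep_class_Spin2_iff:
  "rep_class Spin2 (x, y, z) \<longleftrightarrow> (\<exists>a b. x = 2 * cos a \<and> y = 2 * cos b \<and> z = 2 * cos (a + b))"
  unfolding rep_class_iff[OF Spin2_subset_SU2]
  by (auto simp: Spin2_eq_range trace_spin_mat spin_mat_mult simp del: of_real_mult of_real_numeral)

lemma rep_class_Pin2_cases:
  assumes "rep_class Pin2 (x, y, z)"
  shows "rep_class Spin2 (x, y, z)
    \<or> (\<exists>t. (x, y, z) \<in> {(2 * cos t, 0, 0), (0, 2 * cos t, 0), (0, 0, 2 * cos t)})"
proof -
  obtain A B where "A \<in> Pin2" "B \<in> Pin2"
    and tr: "trace A = of_real x" "trace B = of_real y" "trace (A ** B) = of_real z"
    using assms unfolding rep_class_iff[OF Pin2_subset_SU2] by blast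
  note trace_simps = trace_spin_mat trace_spin_minus_mat spin_mat_mult_spin_minus_mat
    spin_minus_mat_mult_spin_mat spin_minus_mat_mult
  consider a b where "A = spin_mat a" "B = spin_mat b"
    | a b where "A = spin_mat a" "B = spin_minus_mat b"
    | a b where "A = spin_minus_mat a" "B = spin_mat b"
    | a b where "A = spin_minus_mat a" "B = spin_minus_mat b"
    using \<open>A \<in> Pin2\<close> \<open>B \<in> Pin2\<close>
    unfolding Pin2_def Spin2_eq_range Spin2_minus_eq_range by blast
  then show ?thesis
  proof cases
    case 1
    then have "A \<in> Spin2" "B \<in> Spin2"
      by (simp_all add: Spin2_eq_range)
    then show ?thesis
      using tr rep_class_iff[OF Spin2_subset_SU2] by blast
  next
    case 2
    then have "(x, y, z) = (2 * cos a, 0, 0)"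
      using tr by (simp add: trace_simps del: of_real_mult of_real_numeral)
    then show ?thesis by blast
  next
    case 3
    then have "(x, y, z) = (0, 2 * cos b, 0)"
      using tr by (simp add: trace_simps del: of_real_mult of_real_numeral)
    then show ?thesis by blast
  next
    case 4
    then have "(x, y, z) = (0, 0, 2 * cos (a - b + pi))"
      using tr by (simp add: trace_simps del: of_real_mult of_real_numeral cos_periodic_pi)
    then show ?thesis by blast
  qed
qed

lemma rep_class_Pin2_on_axes:
  "rep_class Pin2 (2 * cos t, 0, 0)" "rep_class Pin2 (0, 2 * cos t, 0)" "rep_class Pin2 (0, 0, 2 * cos t)"
proof -
  have pin: "spin_mat t \<in> Pin2" "spin_minus_mat t \<in> Pin2" for t
    by (auto simp: Pin2_def Spin2_eq_range Spin2_minus_eq_range)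
  show "rep_class Pin2 (2 * cos t, 0, 0)"
    unfolding rep_class_iff[OF Pin2_subset_SU2]
    by (rule bexI[where x = "spin_mat t"], rule bexI[where x = "spin_minus_mat 0"])
      (simp_all add: pin trace_spin_mat trace_spin_minus_mat spin_mat_mult_spin_minus_mat)
  show "rep_class Pin2 (0, 2 * cos t, 0)"
    unfolding rep_class_iff[OF Pin2_subset_SU2]
    by (rule bexI[where x = "spin_minus_mat 0"], rule bexI[where x = "spin_mat t"])
      (simp_all add: pin trace_spin_mat trace_spin_minus_mat spin_minus_mat_mult_spin_mat)
  show "rep_class Pin2 (0, 0, 2 * cos t)"
    unfolding rep_class_iff[OF Pin2_subset_SU2]
    by (rule bexI[where x = "spin_minus_mat t"], rule bexI[where x = "spin_minus_mat pi"])
      (simp_all add: pin trace_spin_mat trace_spin_minus_mat spin_minus_mat_mult del: cos_periodic_pi)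
qed

lemma rep_class_Pin2_iff:
  "rep_class Pin2 (x, y, z) \<longleftrightarrow> rep_class Spin2 (x, y, z) \<or> (x, y, z) \<in> E \<inter> coord_axes"
proof -
  have "Spin2 \<subseteq> Pin2"
    by (simp add: Pin2_def)
  then show ?thesis
    unfolding E_inter_coord_axes_iff
    using rep_class_Pin2_cases rep_class_Pin2_on_axes rep_class_mono by blast
qed

lemma kappa_two_cos_minus_2:
  "kappa (2 * cos a, 2 * cos b, z) - 2 = (z - 2 * cos (a + b)) * (z - 2 * cos (a - b))"
proof -
  have "sin a ^ 2 + cos a ^ 2 = 1" "sin b ^ 2 + cos b ^ 2 = 1"
    by simp_all
  then show ?thesis
    unfolding kappa_def cos_add cos_diff prod.case by algebra
qed

lemma rep_class_Spin2_iff_E_level_2: "rep_class Spin2 p \<longleftrightarrow> p \<in> E_level 2"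
proof -
  obtain x y z where p: "p = (x, y, z)"
    by (cases p) auto
  have "rep_class Spin2 (x, y, z) \<longleftrightarrow> x \<in> {-2..2} \<and> y \<in> {-2..2} \<and> kappa (x, y, z) = 2"
  proof
    assume "rep_class Spin2 (x, y, z)"
    then obtain a b where "x = 2 * cos a" "y = 2 * cos b" "z = 2 * cos (a + b)"
      by (auto simp: rep_class_Spin2_iff)
    then show "x \<in> {-2..2} \<and> y \<in> {-2..2} \<and> kappa (x, y, z) = 2"
      using kappa_two_cos_minus_2[of a b z] by simp
  next
    assume bounds_kappa: "x \<in> {-2..2} \<and> y \<in> {-2..2} \<and> kappa (x, y, z) = 2"
    then obtain a b where x: "x = 2 * cos a" and y: "y = 2 * cos b"
      using ex_two_cos_iff by meson
    then have "z = 2 * cos (a + b) \<or> z = 2 * cos (a + - b)"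
      using kappa_two_cos_minus_2[of a b z] bounds_kappa by simp
    then show "rep_class Spin2 (x, y, z)"
      unfolding rep_class_Spin2_iff using x y cos_minus by metis
  qed
  moreover have "rep_class Spin2 (x, y, z) \<Longrightarrow> z \<in> {-2..2}"
    by (auto simp: rep_class_Spin2_iff)
  ultimately show ?thesis
    unfolding p E_level_def E_def by auto
qed

lemma E_level_inter_coord_axes:
  assumes "-2 < k" "k < 2"
  defines "s \<equiv> sqrt (k + 2)"
  shows "E_level k \<inter> coord_axes = {(s,0,0), (-s,0,0), (0,s,0), (0,-s,0), (0,0,s), (0,0,-s)}"
    (is "_ = ?six")
proof (rule set_eqI)
  fix p :: "real \<times> real \<times> real"
  obtain x y z where p: "p = (x, y, z)"
    by (cases p) auto
  have s: "0 < s" "s < 2" "k = s\<^sup>2 - 2"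
    using assms real_sqrt_less_iff[of "k + 2" 4] by (simp_all add: s_def)
  have roots: "t\<^sup>2 = s\<^sup>2 \<longleftrightarrow> t = s \<or> t = -s" for t :: real
    by (rule power2_eq_iff)
  have "p \<in> E_level k \<inter> coord_axes \<longleftrightarrow>
      p \<in> coord_axes \<and> x \<in> {-2..2} \<and> y \<in> {-2..2} \<and> z \<in> {-2..2} \<and> x\<^sup>2 + y\<^sup>2 + z\<^sup>2 = s\<^sup>2"
    using coord_axes_in_E_iff[of x y z] unfolding p s(3)
    by (auto simp: E_level_def kappa_def coord_axes_def)
  also have "\<dots> \<longleftrightarrow> p \<in> ?six"
    using s(1,2) unfolding p by (auto simp: coord_axes_def roots)
  finally show "p \<in> E_level k \<inter> coord_axes \<longleftrightarrow> p \<in> ?six" .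
qed

theorem corollary3p2:
  shows "{p \<in> E. rep_class Spin2 p} = E_level 2
       \<and> {p \<in> E. rep_class Pin2 p} = E_level 2 \<union> (E \<inter> coord_axes)
       \<and> (\<forall>k::real. -2 < k \<and> k < 2 \<longrightarrow> card {p \<in> E_level k. rep_class Pin2 p} = 6)"
proof (intro conjI allI impI)
  have E_level_subset: "E_level k \<subseteq> E" for k
    by (auto simp: E_level_def)
  then show "{p \<in> E. rep_class Spin2 p} = E_level 2"
    using rep_class_Spin2_iff_E_level_2 by blast
  show "{p \<in> E. rep_class Pin2 p} = E_level 2 \<union> (E \<inter> coord_axes)"
    using E_level_subset by (auto simp: rep_class_Pin2_iff rep_class_Spin2_iff_E_level_2)
  fix k :: real
  assume k: "-2 < k \<and> k < 2"
  then have "{p \<in> E_level k. rep_class Pin2 p} = E_level k \<inter> coord_axes"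
    by (auto simp: rep_class_Pin2_iff rep_class_Spin2_iff_E_level_2 E_level_def)
  also have "\<dots> = {(sqrt (k + 2),0,0), (- sqrt (k + 2),0,0), (0,sqrt (k + 2),0),
      (0,- sqrt (k + 2),0), (0,0,sqrt (k + 2)), (0,0,- sqrt (k + 2))}"
    using k by (simp add: E_level_inter_coord_axes)
  also have "card \<dots> = 6"
    using k by simp
  finally show "card {p \<in> E_level k. rep_class Pin2 p} = 6" .
qed

end
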